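(* Let $(\mathbb{H}, \langle\cdot,\cdot\rangle)$ be a separable real Hilbert space of functions $\mathcal{X} \to \mathbb{R}$, and let $G$ be a group acting linearly on $\mathbb{H}$ from the left such that $\langle g f_1, g f_2\rangle = \langle f_1, f_2\rangle$ for all $f_1, f_2 \in \mathbb{H}$ and $g \in G$. Let $T\colon \mathbb{H}\to\mathbb{H}$ be a bounded linear operator which is compact. Then there exist a sequence of continuous (possibly nonlinear) operators $E_n\colon \mathbb{H}^{1+2n}\to \mathbb{H}$, $n\ge 1$, and a sequence of functions $(t_n)_{n\ge1}\subseteq \mathbb{H}$ such that every $E_n$ is $G$-equivariant, i.e. \[ E_n(g f_1, g f_2, \ldots, g f_{2n+1}) = g\,E_n(f_1, f_2, \ldots, f_{2n+1}) \quad\text{for all } g\in G \text{ and } f_1,\ldots,f_{2n+1}\in\mathbb{H}, \] and \[ \big\| T - E_n(\,\cdot\,, t_1, \ldots, t_{2n}) \big\| \to 0 \quad (n\to\infty), \] where $\|S\| = \sup_{f\in\mathbb{H},\,\|f\|\le 1}\|S(f)\|$ denotes the operator norm of a map $S\colon\mathbb{H}\to\mathbb{H}$.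
   Context: A bounded linear operator on $\mathbb{H}$ is compact if the image of every bounded set is relatively compact. The group action is linear: $g(f_1+f_2) = gf_1 + gf_2$ (and $g(\lambda f)=\lambda gf$), and it is a left action ($ef = f$, $h(gf) = (hg)f$). *)

theory Defs
  imports "HOL-Analysis.Analysis" "HOL-Algebra.Group"
begin

definition compact_operator :: "('h::real_normed_vector \<Rightarrow> 'h) \<Rightarrow> bool" where
  "compact_operator T \<longleftrightarrow> bounded_linear T \<and> (\<forall>B. bounded B \<longrightarrow> compact (closure (T ` B)))"

definition nl_opnorm :: "('h::real_normed_vector \<Rightarrow> 'h) \<Rightarrow> ereal" where
  "nl_opnorm S = (SUP f \<in> cball 0 1. ereal (norm (S f)))"

text \<open>Elements of H^k are represented as lists of length k; continuity w.r.t. the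
  product topology on H^k.\<close>
definition tuple_continuous :: "nat \<Rightarrow> ('h::metric_space list \<Rightarrow> 'h) \<Rightarrow> bool" where
  "tuple_continuous k E \<longleftrightarrow>
     (\<forall>xs. length xs = k \<longrightarrow> (\<forall>e>0. \<exists>d>0. \<forall>ys. length ys = k \<longrightarrow>
        (\<forall>i<k. dist (ys ! i) (xs ! i) < d) \<longrightarrow> dist (E ys) (E xs) < e))"

end

theory Submission
  imports Defs
begin

text \<open>Gram-Schmidt applied to a dense sequence yields an orthonormal sequence \<open>e\<^sub>i\<close> whose
  spans are dense. Since \<open>T\<close> maps the unit ball into a compact set, on which the Fourier
  partial sums converge uniformly (they are best approximations from increasing subspaces),
  \<open>T f\<close> is approximated in operator norm by \<open>\<Sum>\<^sub>i<n \<langle>T f, e\<^sub>i\<rangle> e\<^sub>i = \<Sum>\<^sub>i<n \<langle>f, T\<^sup>* e\<^sub>i\<rangle> e\<^sub>i\<close>,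
  the adjoint being provided by the Riesz representation theorem. The map
  \<open>(f, a\<^sub>1, b\<^sub>1, \<dots>, a\<^sub>n, b\<^sub>n) \<mapsto> \<Sum>\<^sub>i \<langle>f, a\<^sub>i\<rangle> b\<^sub>i\<close> is continuous and, being built from inner
  products and linear combinations, equivariant under any orthogonal linear action; it is
  evaluated at \<open>t = (T\<^sup>* e\<^sub>0, e\<^sub>0, T\<^sup>* e\<^sub>1, e\<^sub>1, \<dots>)\<close>.\<close>

lemma sum_eq_single:
  assumes "finite I" "k \<in> I" "\<And>i. i \<in> I \<Longrightarrow> i \<noteq> k \<Longrightarrow> g i = 0"
  shows "(\<Sum>i\<in>I. g i) = g k"
  using sum.mono_neutral_left[of I "{k}" g] assms by auto

text \<open>\<open>gram_schmidt_upto z n\<close> holds the first \<open>n\<close> Gram-Schmidt vectors of \<open>z\<close>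
  (and \<open>0\<close> from index \<open>n\<close> on).\<close>
primrec gram_schmidt_upto :: "(nat \<Rightarrow> 'a::real_inner) \<Rightarrow> nat \<Rightarrow> nat \<Rightarrow> 'a" where
  "gram_schmidt_upto z 0 = (\<lambda>_. 0)"
| "gram_schmidt_upto z (Suc n) = (gram_schmidt_upto z n)(n :=
     sgn (z n - (\<Sum>i<n. inner (z n) (gram_schmidt_upto z n i) *\<^sub>R gram_schmidt_upto z n i)))"

definition gram_schmidt :: "(nat \<Rightarrow> 'a::real_inner) \<Rightarrow> nat \<Rightarrow> 'a" where
  "gram_schmidt z n = gram_schmidt_upto z (Suc n) n"

lemma gram_schmidt_upto_eq: "i < n \<Longrightarrow> gram_schmidt_upto z n i = gram_schmidt z i"
  by (induction n) (auto simp: gram_schmidt_def less_Suc_eq)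

lemma gram_schmidt_eq:
  "gram_schmidt z n = sgn (z n - (\<Sum>i<n. inner (z n) (gram_schmidt z i) *\<^sub>R gram_schmidt z i))"
proof -
  have "(\<Sum>i<n. inner (z n) (gram_schmidt_upto z n i) *\<^sub>R gram_schmidt_upto z n i)
      = (\<Sum>i<n. inner (z n) (gram_schmidt z i) *\<^sub>R gram_schmidt z i)"
    by (intro sum.cong) (auto simp: gram_schmidt_upto_eq)
  then show ?thesis
    by (simp add: gram_schmidt_def)
qed

lemma gram_schmidt_unit_or_zero: "gram_schmidt z n = 0 \<or> norm (gram_schmidt z n) = 1"
  by (subst (1 2) gram_schmidt_eq) (simp add: norm_sgn)

lemma inner_scale_self_unit_or_zero:
  fixes v :: "'a::real_inner"
  assumes "v = 0 \<or> norm v = 1"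
  shows "inner x v * inner v v = inner x v"
  using assms by (auto simp: power2_norm_eq_inner[symmetric])

lemma gram_schmidt_orthogonal_earlier:
  "j < n \<Longrightarrow> inner (gram_schmidt z n) (gram_schmidt z j) = 0"
proof (induction n arbitrary: j rule: less_induct)
  case (less n)
  let ?e = "gram_schmidt z"
  have orth: "inner (?e i) (?e k) = 0" if "i < n" "k < n" "i \<noteq> k" for i k
    using that less.IH[of k i] less.IH[of i k] by (cases "i < k") (auto simp: inner_commute)
  define w where "w = z n - (\<Sum>i<n. inner (z n) (?e i) *\<^sub>R ?e i)"
  have "(\<Sum>i<n. inner (z n) (?e i) * inner (?e i) (?e j)) = inner (z n) (?e j) * inner (?e j) (?e j)"
    using less.prems orth by (intro sum_eq_single) auto
  also have "\<dots> = inner (z n) (?e j)"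
    using gram_schmidt_unit_or_zero by (rule inner_scale_self_unit_or_zero)
  finally have "inner w (?e j) = 0"
    by (simp add: w_def inner_diff_left inner_sum_left)
  then show ?case
    by (simp add: gram_schmidt_eq[of z n] w_def[symmetric] sgn_div_norm)
qed

lemma gram_schmidt_orthogonal:
  "i \<noteq> j \<Longrightarrow> inner (gram_schmidt z i) (gram_schmidt z j) = 0"
  using gram_schmidt_orthogonal_earlier[of i j z] gram_schmidt_orthogonal_earlier[of j i z]
  by (cases "i < j") (auto simp: inner_commute)

lemma in_span_gram_schmidt: "z n \<in> span (gram_schmidt z ` {..n})"
proof -
  define p where "p = (\<Sum>i<n. inner (z n) (gram_schmidt z i) *\<^sub>R gram_schmidt z i)"
  have "z n = norm (z n - p) *\<^sub>R gram_schmidt z n + p"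
    by (cases "z n = p") (simp_all add: gram_schmidt_eq[of z n] p_def[symmetric] sgn_div_norm)
  also have "\<dots> \<in> span (gram_schmidt z ` {..n})"
    unfolding p_def by (intro span_add span_sum span_mul span_base) auto
  finally show ?thesis .
qed

text \<open>Zero vectors are allowed, so that Gram-Schmidt needs no case distinction for
  linearly dependent input.\<close>
locale orthonormal_seq =
  fixes e :: "nat \<Rightarrow> 'a::real_inner"
  assumes orthogonal: "\<And>i j. i \<noteq> j \<Longrightarrow> inner (e i) (e j) = 0"
    and unit_or_zero: "\<And>i. e i = 0 \<or> norm (e i) = 1"
begin

lemma inner_scale_self: "inner x (e k) * inner (e k) (e k) = inner x (e k)"
  using unit_or_zero by (rule inner_scale_self_unit_or_zero)

lemma inner_sum_basis:
  assumes "finite I" "k \<in> I"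
  shows "inner (\<Sum>i\<in>I. c i *\<^sub>R e i) (e k) = c k * inner (e k) (e k)"
  unfolding inner_sum_left using assms orthogonal by (subst sum_eq_single[of I k]) auto

lemma norm_sum_squared:
  assumes "finite I"
  shows "(norm (\<Sum>i\<in>I. c i *\<^sub>R e i))\<^sup>2 = (\<Sum>i\<in>I. (c i)\<^sup>2 * inner (e i) (e i))"
proof -
  define s where "s = (\<Sum>i\<in>I. c i *\<^sub>R e i)"
  have "(norm s)\<^sup>2 = inner s (\<Sum>i\<in>I. c i *\<^sub>R e i)"
    by (simp add: power2_norm_eq_inner s_def)
  also have "\<dots> = (\<Sum>i\<in>I. c i * inner s (e i))"
    by (simp add: inner_sum_right)
  also have "\<dots> = (\<Sum>i\<in>I. (c i)\<^sup>2 * inner (e i) (e i))"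
    unfolding s_def using assms
    by (intro sum.cong) (simp_all add: inner_sum_basis power2_eq_square)
  finally show ?thesis
    by (simp add: s_def)
qed

lemma norm_sum_squared_le:
  assumes "finite I"
  shows "(norm (\<Sum>i\<in>I. c i *\<^sub>R e i))\<^sup>2 \<le> (\<Sum>i\<in>I. (c i)\<^sup>2)"
  unfolding norm_sum_squared[OF assms]
proof (rule sum_mono)
  fix i
  show "(c i)\<^sup>2 * inner (e i) (e i) \<le> (c i)\<^sup>2"
    using unit_or_zero[of i] by (auto simp: power2_norm_eq_inner[symmetric])
qed

lemma fourier_sum_orthogonal:
  assumes "finite I" "k \<in> I"
  shows "inner (x - (\<Sum>i\<in>I. inner x (e i) *\<^sub>R e i)) (e k) = 0"
  by (simp add: inner_diff_left inner_sum_basis[OF assms] inner_scale_self)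

lemma fourier_sum_closest:
  assumes "finite I" "w \<in> span (e ` I)"
  shows "norm (x - (\<Sum>i\<in>I. inner x (e i) *\<^sub>R e i)) \<le> norm (x - w)"
proof -
  define p where "p = (\<Sum>i\<in>I. inner x (e i) *\<^sub>R e i)"
  have "p - w \<in> span (e ` I)"
    unfolding p_def by (intro span_diff span_sum span_mul span_base assms) auto
  moreover have "orthogonal (x - p) y" if "y \<in> e ` I" for y
    using that fourier_sum_orthogonal[OF assms(1)] by (auto simp: orthogonal_def p_def)
  ultimately have "orthogonal (x - p) (p - w)"
    by (rule orthogonal_to_span)
  then have "(norm (x - w))\<^sup>2 = (norm (x - p))\<^sup>2 + (norm (p - w))\<^sup>2"
    using norm_add_Pythagorean by fastforce
  then have "(norm (x - p))\<^sup>2 \<le> (norm (x - w))\<^sup>2"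
    by simp
  then show ?thesis
    unfolding p_def[symmetric] by (rule power2_le_imp_le) simp
qed

lemma inner_fourier_series_limit:
  assumes "(\<lambda>n. \<Sum>i<n. c i *\<^sub>R e i) \<longlonglongrightarrow> u"
  shows "inner u (e k) = c k * inner (e k) (e k)"
proof -
  have "(\<lambda>n. inner (\<Sum>i<n. c i *\<^sub>R e i) (e k)) \<longlonglongrightarrow> inner u (e k)"
    by (intro tendsto_intros assms)
  moreover have "\<forall>\<^sub>F n in sequentially. inner (\<Sum>i<n. c i *\<^sub>R e i) (e k) = c k * inner (e k) (e k)"
    using eventually_gt_at_top[of k] by eventually_elim (simp add: inner_sum_basis)
  ultimately show ?thesis
    using tendsto_eventually LIMSEQ_unique by metis
qed

lemma bounded_linear_coeffs_summable:
  fixes \<phi> :: "'a \<Rightarrow> real"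
  assumes "bounded_linear \<phi>"
  shows "summable (\<lambda>i. (\<phi> (e i))\<^sup>2)"
proof -
  interpret \<phi>: bounded_linear \<phi> by (rule assms)
  obtain K where K: "\<And>x. norm (\<phi> x) \<le> norm x * K" "K > 0"
    using \<phi>.pos_bounded by blast
  have "(\<Sum>i<n. (\<phi> (e i))\<^sup>2) \<le> K\<^sup>2" for n
  proof -
    define v where "v = (\<Sum>i<n. \<phi> (e i) *\<^sub>R e i)"
    have coeff: "(\<phi> (e i))\<^sup>2 * inner (e i) (e i) = (\<phi> (e i))\<^sup>2" for i
      using unit_or_zero[of i] by (auto simp: power2_norm_eq_inner[symmetric])
    have norm_v: "(norm v)\<^sup>2 = (\<Sum>i<n. (\<phi> (e i))\<^sup>2)"
      unfolding v_def norm_sum_squared[OF finite_lessThan] coeff ..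
    also have "\<dots> = \<phi> v"
      by (simp add: v_def \<phi>.sum \<phi>.scale power2_eq_square)
    also have "\<dots> \<le> norm v * K"
      using K(1)[of v] by simp
    finally have "norm v \<le> K"
      using K(2) by (cases "norm v = 0") (auto simp: power2_eq_square)
    then have "(norm v)\<^sup>2 \<le> K\<^sup>2"
      by (simp add: power_mono)
    then show ?thesis
      by (simp only: norm_v)
  qed
  then show ?thesis
    by (intro summableI_nonneg_bounded) auto
qed

end

locale orthonormal_basis_seq = orthonormal_seq e for e :: "nat \<Rightarrow> 'a::{real_inner,complete_space}" +
  assumes spans_dense: "\<And>x \<epsilon>. \<epsilon> > 0 \<Longrightarrow> \<exists>n. \<exists>w\<in>span (e ` {..<n}). dist x w < \<epsilon>"
begin

lemma fourier_series_convergent: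
  fixes c :: "nat \<Rightarrow> real"
  assumes "summable (\<lambda>i. (c i)\<^sup>2)"
  shows "convergent (\<lambda>n. \<Sum>i<n. c i *\<^sub>R e i)"
proof (rule Cauchy_convergent, rule CauchyI')
  fix \<epsilon> :: real assume "\<epsilon> > 0"
  then obtain N where N: "\<And>m n. m \<ge> N \<Longrightarrow> norm (\<Sum>i\<in>{m..<n}. (c i)\<^sup>2) < \<epsilon>\<^sup>2"
    using assms[unfolded summable_Cauchy] by (meson zero_less_power)
  show "\<exists>M. \<forall>m\<ge>M. \<forall>n>m. dist (\<Sum>i<m. c i *\<^sub>R e i) (\<Sum>i<n. c i *\<^sub>R e i) < \<epsilon>"
  proof (intro exI allI impI)
    fix m n assume "m \<ge> N" "n > m"
    have "(\<Sum>i<n. c i *\<^sub>R e i) - (\<Sum>i<m. c i *\<^sub>R e i) = (\<Sum>i\<in>{m..<n}. c i *\<^sub>R e i)"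
      using sum_diff_nat_ivl[of 0 m n "\<lambda>i. c i *\<^sub>R e i"] \<open>n > m\<close> by (simp add: atLeast0LessThan)
    then have "dist (\<Sum>i<m. c i *\<^sub>R e i) (\<Sum>i<n. c i *\<^sub>R e i) = norm (\<Sum>i\<in>{m..<n}. c i *\<^sub>R e i)"
      by (metis dist_commute dist_norm)
    moreover have "(norm (\<Sum>i\<in>{m..<n}. c i *\<^sub>R e i))\<^sup>2 < \<epsilon>\<^sup>2"
      using norm_sum_squared_le[of "{m..<n}" c] N[OF \<open>m \<ge> N\<close>, of n] by simp
    ultimately show "dist (\<Sum>i<m. c i *\<^sub>R e i) (\<Sum>i<n. c i *\<^sub>R e i) < \<epsilon>"
      using \<open>\<epsilon> > 0\<close> by (simp add: power2_less_imp_less)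
  qed
qed

theorem riesz_representation:
  fixes \<phi> :: "'a \<Rightarrow> real"
  assumes "bounded_linear \<phi>"
  shows "\<exists>u. \<forall>x. \<phi> x = inner x u"
proof -
  interpret \<phi>: bounded_linear \<phi> by (rule assms)
  obtain u where u: "(\<lambda>n. \<Sum>i<n. \<phi> (e i) *\<^sub>R e i) \<longlonglongrightarrow> u"
    using fourier_series_convergent[OF bounded_linear_coeffs_summable[OF assms]]
    unfolding convergent_def by blast
  have on_basis: "\<phi> (e k) = inner (e k) u" for k
  proof (cases "e k = 0")
    case False
    then have "inner (e k) (e k) = 1"
      using unit_or_zero[of k] by (simp add: power2_norm_eq_inner[symmetric])
    then show ?thesis
      using inner_fourier_series_limit[OF u, of k] by (metis inner_commute mult.right_neutral)
  qed simp
  have "linear (\<lambda>x. inner x u)"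
    by (rule bounded_linear.linear[OF bounded_linear_inner_left])
  then have on_span: "\<phi> w = inner w u" if "w \<in> span (range e)" for w
    using on_basis by (intro linear_eq_on_span[OF \<phi>.linear _ _ that]) auto
  have closed: "closed {x. \<phi> x = inner x u}"
    using linear_continuous_on[OF assms] continuous_on_inner[OF continuous_on_id continuous_on_const]
    by (rule closed_Collect_eq)
  have "x \<in> closure {x. \<phi> x = inner x u}" for x
    unfolding closure_approachable
  proof (intro allI impI)
    fix \<epsilon> :: real assume "\<epsilon> > 0"
    then obtain n w where w: "w \<in> span (e ` {..<n})" "dist x w < \<epsilon>"
      using spans_dense by blast
    have "span (e ` {..<n}) \<subseteq> span (range e)"
      by (intro span_mono image_mono) simp
    then have "\<phi> w = inner w u"
      using w(1) on_span by blast
    then show "\<exists>w\<in>{x. \<phi> x = inner x u}. dist w x < \<epsilon>"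
      using w(2) by (intro bexI[of _ w]) (simp_all add: dist_commute)
  qed
  then show ?thesis
    unfolding closure_closed[OF closed] by blast
qed

corollary adjoint_exists:
  fixes T :: "'a \<Rightarrow> 'a"
  assumes "bounded_linear T"
  shows "\<exists>T'. \<forall>x y. inner (T x) y = inner x (T' y)"
proof -
  have "\<exists>v. \<forall>x. inner (T x) y = inner x v" for y
    using bounded_linear_compose[OF bounded_linear_inner_left assms] by (rule riesz_representation)
  then have "\<forall>y. \<exists>v. \<forall>x. inner (T x) y = inner x v"
    by blast
  from choice[OF this] obtain T' where "\<forall>y x. inner (T x) y = inner x (T' y)" ..
  then show ?thesis
    by blast
qed

lemma fourier_sums_uniform_on_compact:
  assumes "compact K" "\<epsilon> > 0"
  shows "\<forall>\<^sub>F n in sequentially. \<forall>y\<in>K. norm (y - (\<Sum>i<n. inner y (e i) *\<^sub>R e i)) \<le> \<epsilon>"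
proof -
  have "\<epsilon>/2 > 0"
    using assms(2) by simp
  then obtain C where C: "finite C" "K \<subseteq> (\<Union>x\<in>C. ball x (\<epsilon>/2))"
    using seq_compact_imp_totally_bounded[OF compact_imp_seq_compact[OF assms(1)]] by blast
  obtain N where N: "\<And>x. \<exists>w\<in>span (e ` {..<N x}). dist x w < \<epsilon>/2"
    using spans_dense[OF \<open>\<epsilon>/2 > 0\<close>] by metis
  show ?thesis
  proof (rule eventually_sequentiallyI[of "Max (N ` C)"], intro ballI)
    fix n y assume n: "Max (N ` C) \<le> n" and "y \<in> K"
    then obtain x where x: "x \<in> C" "dist x y < \<epsilon>/2"
      using C(2) by (auto simp: mem_ball)
    obtain w where w: "w \<in> span (e ` {..<N x})" "dist x w < \<epsilon>/2"
      using N by blast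
    have "N x \<le> n"
      using C(1) x(1) by (intro order_trans[OF Max_ge n]) auto
    then have "span (e ` {..<N x}) \<subseteq> span (e ` {..<n})"
      by (intro span_mono image_mono) simp
    then have "w \<in> span (e ` {..<n})"
      using w(1) by blast
    then have "norm (y - (\<Sum>i<n. inner y (e i) *\<^sub>R e i)) \<le> dist y w"
      using fourier_sum_closest[OF finite_lessThan] by (simp add: dist_norm)
    also have "\<dots> \<le> dist x y + dist x w"
      by (rule dist_triangle3)
    also have "\<dots> < \<epsilon>"
      using x(2) w(2) by linarith
    finally show "norm (y - (\<Sum>i<n. inner y (e i) *\<^sub>R e i)) \<le> \<epsilon>"
      by simp
  qed
qed

end

lemma separable_space_dense_sequence:
  assumes "separable_space (euclidean :: 'a::metric_space topology)"
  obtains z :: "nat \<Rightarrow> 'a::metric_space" where "\<And>x \<epsilon>. \<epsilon> > 0 \<Longrightarrow> \<exists>n. dist (z n) x < \<epsilon>"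
proof -
  obtain C :: "'a set" where C: "countable C" "closure C = UNIV"
    using assms by (auto simp: separable_space_def euclidean_closure_of)
  have "\<exists>n. dist (from_nat_into C n) x < \<epsilon>" if "\<epsilon> > 0" for x \<epsilon>
  proof -
    have "x \<in> closure C"
      using C(2) by simp
    then obtain y where "y \<in> C" "dist y x < \<epsilon>"
      using \<open>\<epsilon> > 0\<close> closure_approachable by blast
    then show ?thesis
      using from_nat_into_surj[OF C(1)] by metis
  qed
  then show ?thesis
    by (rule that)
qed

lemma separable_space_orthonormal_basis_seq:
  assumes "separable_space (euclidean :: 'a::{real_inner,complete_space} topology)"
  obtains e :: "nat \<Rightarrow> 'a::{real_inner,complete_space}" where "orthonormal_basis_seq e"
proof -
  obtain z :: "nat \<Rightarrow> 'a" where z: "\<And>x \<epsilon>. \<epsilon> > 0 \<Longrightarrow> \<exists>n. dist (z n) x < \<epsilon>"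
    using separable_space_dense_sequence[OF assms] by blast
  have "orthonormal_basis_seq (gram_schmidt z)"
  proof unfold_locales
    show "gram_schmidt z i = 0 \<or> norm (gram_schmidt z i) = 1" for i
      by (rule gram_schmidt_unit_or_zero)
    show "inner (gram_schmidt z i) (gram_schmidt z j) = 0" if "i \<noteq> j" for i j
      using that by (rule gram_schmidt_orthogonal)
    show "\<exists>n. \<exists>w\<in>span (gram_schmidt z ` {..<n}). dist x w < \<epsilon>" if \<epsilon>: "\<epsilon> > 0" for x \<epsilon>
    proof -
      obtain n where "dist (z n) x < \<epsilon>"
        using z[OF \<epsilon>] by blast
      moreover have "z n \<in> span (gram_schmidt z ` {..<Suc n})"
        using in_span_gram_schmidt[of z n] by (simp add: lessThan_Suc_atMost)
      ultimately show ?thesis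
        by (intro exI[of _ "Suc n"] bexI[of _ "z n"]) (simp_all add: dist_commute)
    qed
  qed
  then show ?thesis
    by (rule that)
qed

lemma tuple_continuous_sequentially:
  fixes E :: "'a::metric_space list \<Rightarrow> 'a"
  assumes "\<And>xs X. length xs = k \<Longrightarrow> (\<And>m. length (X m) = k) \<Longrightarrow>
      (\<And>i. i < k \<Longrightarrow> (\<lambda>m. X m ! i) \<longlonglongrightarrow> xs ! i) \<Longrightarrow> (\<lambda>m. E (X m)) \<longlonglongrightarrow> E xs"
  shows "tuple_continuous k E"
  unfolding tuple_continuous_def
proof (intro allI impI)
  fix xs :: "'a list" and \<epsilon> :: real
  assume len: "length xs = k" and "\<epsilon> > 0"
  show "\<exists>d>0. \<forall>ys. length ys = k \<longrightarrow> (\<forall>i<k. dist (ys ! i) (xs ! i) < d) \<longrightarrow> dist (E ys) (E xs) < \<epsilon>"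
  proof (rule ccontr)
    assume no_delta: "\<not> ?thesis"
    have "\<exists>ys. length ys = k \<and> (\<forall>i<k. dist (ys ! i) (xs ! i) < inverse (real (Suc m)))
            \<and> \<not> dist (E ys) (E xs) < \<epsilon>" for m
    proof -
      have "inverse (real (Suc m)) > 0"
        by simp
      then show ?thesis
        using no_delta by blast
    qed
    then have "\<forall>m. \<exists>ys. length ys = k \<and> (\<forall>i<k. dist (ys ! i) (xs ! i) < inverse (real (Suc m)))
                 \<and> \<not> dist (E ys) (E xs) < \<epsilon>"
      by blast
    from choice[OF this] obtain X where "\<forall>m. length (X m) = k
        \<and> (\<forall>i<k. dist (X m ! i) (xs ! i) < inverse (real (Suc m))) \<and> \<not> dist (E (X m)) (E xs) < \<epsilon>" ..
    then have X: "\<And>m. length (X m) = k"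
        "\<And>m i. i < k \<Longrightarrow> dist (X m ! i) (xs ! i) < inverse (real (Suc m))"
        "\<And>m. \<not> dist (E (X m)) (E xs) < \<epsilon>"
      by auto
    have "(\<lambda>m. X m ! i) \<longlonglongrightarrow> xs ! i" if "i < k" for i
    proof -
      have "norm (dist (X m ! i) (xs ! i)) \<le> inverse (real (Suc m))" for m
        using X(2)[OF that, of m] by simp
      then have "(\<lambda>m. dist (X m ! i) (xs ! i)) \<longlonglongrightarrow> 0"
        by (intro Lim_null_comparison[OF always_eventually LIMSEQ_inverse_real_of_nat] allI)
      then show ?thesis
        by (rule tendsto_dist_iff[THEN iffD2])
    qed
    then have "(\<lambda>m. E (X m)) \<longlonglongrightarrow> E xs"
      by (rule assms[OF len X(1)])
    then have "\<forall>\<^sub>F m in sequentially. dist (E (X m)) (E xs) < \<epsilon>"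
      using \<open>\<epsilon> > 0\<close> by (rule tendstoD)
    then show False
      using X(3) by (simp add: eventually_sequentially)
  qed
qed

lemma nl_opnorm_tendsto_zero:
  fixes S :: "nat \<Rightarrow> 'a::real_normed_vector \<Rightarrow> 'a"
  assumes "\<And>\<epsilon>. \<epsilon> > 0 \<Longrightarrow> \<forall>\<^sub>F n in sequentially. \<forall>f\<in>cball 0 1. norm (S n f) \<le> \<epsilon>"
  shows "(\<lambda>n. nl_opnorm (S n)) \<longlonglongrightarrow> 0"
proof (rule order_tendstoI)
  fix a :: ereal assume "a < 0"
  have "ereal (norm (S n 0)) \<le> nl_opnorm (S n)" for n
    unfolding nl_opnorm_def by (rule SUP_upper) simp
  moreover have "a < ereal (norm (S n 0))" for n
    using \<open>a < 0\<close> by (rule less_le_trans) simp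
  ultimately show "\<forall>\<^sub>F n in sequentially. a < nl_opnorm (S n)"
    by (intro always_eventually allI) (rule less_le_trans)
next
  fix a :: ereal assume "0 < a"
  then obtain r where r: "0 < ereal r" "ereal r < a"
    using ereal_dense2 by blast
  then have "r > 0"
    by simp
  show "\<forall>\<^sub>F n in sequentially. nl_opnorm (S n) < a"
    using assms[OF \<open>r > 0\<close>]
  proof eventually_elim
    case (elim n)
    then have "nl_opnorm (S n) \<le> ereal r"
      unfolding nl_opnorm_def by (intro SUP_least) simp
    then show ?case
      using r(2) by simp
  qed
qed

definition rank_one_sum :: "nat \<Rightarrow> 'a::real_inner list \<Rightarrow> 'a" where
  "rank_one_sum n fs = (\<Sum>i<n. inner (fs ! 0) (fs ! (2 * i + 1)) *\<^sub>R fs ! (2 * i + 2))"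

lemma tuple_continuous_rank_one_sum:
  "tuple_continuous (2 * n + 1) (rank_one_sum n :: 'a::real_inner list \<Rightarrow> 'a)"
proof (rule tuple_continuous_sequentially)
  fix xs :: "'a list" and X
  assume "\<And>i. i < 2 * n + 1 \<Longrightarrow> (\<lambda>m. X m ! i) \<longlonglongrightarrow> xs ! i"
  then show "(\<lambda>m. rank_one_sum n (X m)) \<longlonglongrightarrow> rank_one_sum n xs"
    unfolding rank_one_sum_def by (intro tendsto_sum tendsto_scaleR tendsto_inner) auto
qed

lemma rank_one_sum_equivariant:
  assumes "linear A" "\<And>x y. inner (A x) (A y) = inner x y" "length fs = 2 * n + 1"
  shows "rank_one_sum n (map A fs) = A (rank_one_sum n fs)"
proof -
  interpret A: linear A by (rule assms)
  show ?thesis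
    unfolding rank_one_sum_def A.sum A.scale using assms(3)
    by (intro sum.cong) (simp_all add: assms(2))
qed

lemma rank_one_sum_interleaved:
  "rank_one_sum n (f # map t [1..<2 * n + 1]) = (\<Sum>i<n. inner f (t (2 * i + 1)) *\<^sub>R t (2 * i + 2))"
  unfolding rank_one_sum_def by (intro sum.cong) (simp_all add: nth_map nth_upt del: upt_Suc)

theorem theorem2:
  fixes G :: "('g, 'b) monoid_scheme"
    and act :: "'g \<Rightarrow> 'h::{real_inner, complete_space} \<Rightarrow> 'h"
    and T :: "'h \<Rightarrow> 'h"
  assumes sep: "separable_space (euclidean :: 'h topology)"
    and grp: "group G"
    and lin: "\<And>g. g \<in> carrier G \<Longrightarrow> linear (act g)"
    and act_one: "\<And>f. act \<one>\<^bsub>G\<^esub> f = f"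
    and act_mult: "\<And>g h f. g \<in> carrier G \<Longrightarrow> h \<in> carrier G \<Longrightarrow>
                      act h (act g f) = act (h \<otimes>\<^bsub>G\<^esub> g) f"
    and inner_inv: "\<And>g f1 f2. g \<in> carrier G \<Longrightarrow> inner (act g f1) (act g f2) = inner f1 f2"
    and T_bl: "bounded_linear T"
    and T_cpt: "compact_operator T"
  shows "\<exists>(E :: nat \<Rightarrow> 'h list \<Rightarrow> 'h) (t :: nat \<Rightarrow> 'h).
           (\<forall>n\<ge>1. tuple_continuous (2 * n + 1) (E n)) \<and>
           (\<forall>n\<ge>1. \<forall>g\<in>carrier G. \<forall>fs. length fs = 2 * n + 1 \<longrightarrow>
                E n (map (act g) fs) = act g (E n fs)) \<and>
           ((\<lambda>n. nl_opnorm (\<lambda>f. T f - E n (f # map t [1..<2 * n + 1]))) \<longlonglongrightarrow> 0)"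
proof -
  obtain e :: "nat \<Rightarrow> 'h" where "orthonormal_basis_seq e"
    using sep by (rule separable_space_orthonormal_basis_seq)
  then interpret orthonormal_basis_seq e .
  obtain T' where T': "\<And>x y. inner (T x) y = inner x (T' y)"
    using adjoint_exists[OF T_bl] by blast
  define t where "t j = (if odd j then T' (e (j div 2)) else e (j div 2 - 1))" for j
  have fourier: "rank_one_sum n (f # map t [1..<2 * n + 1]) = (\<Sum>i<n. inner (T f) (e i) *\<^sub>R e i)" for n f
    unfolding rank_one_sum_interleaved by (intro sum.cong) (simp_all add: t_def T')
  have "compact (closure (T ` cball 0 1))"
    using T_cpt bounded_cball unfolding compact_operator_def by blast
  then have "(\<lambda>n. nl_opnorm (\<lambda>f. T f - rank_one_sum n (f # map t [1..<2 * n + 1]))) \<longlonglongrightarrow> 0"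
    unfolding fourier
    by (intro nl_opnorm_tendsto_zero fourier_sums_uniform_on_compact[THEN eventually_mono])
      (auto intro: closure_subset[THEN subsetD])
  moreover have "rank_one_sum n (map (act g) fs) = act g (rank_one_sum n fs)"
    if "g \<in> carrier G" "length fs = 2 * n + 1" for n g fs
    using lin inner_inv that by (intro rank_one_sum_equivariant)
  ultimately show ?thesis
    using tuple_continuous_rank_one_sum by blast
qed

end
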